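(* Let $A$ and $B$ be convex subsets of $\mathbb R^2$ and let $k\ge 0$ be an integer. Assume $A$ contains a circle of radius $r$ and $B$ contains a circle of radius $R$, such that $rR\ge\frac{1}{2^k}(1+\sqrt2)^2$. Then the scaled grid problem over $\mathbb Z[\omega]$ for $A$, $B$ and $k$ has at least $2$ solutions.
   Context: Let $\omega=e^{i\pi/4}$ and $\mathbb Z[\omega]=\{a_0+a_1\omega+a_2\omega^2+a_3\omega^3: a_j\in\mathbb Z\}\subseteq\mathbb C\cong\mathbb R^2$, with automorphism $(a_0+a_1\omega+a_2\omega^2+a_3\omega^3)^\bullet=a_0-a_1\omega+a_2\omega^2-a_3\omega^3$. A solution of the scaled grid problem over $\mathbb Z[\omega]$ for $A$, $B$ and $k$ is a $u\in\mathbb Z[\omega]$ with $u\in\sqrt2^{\,k}A$ and $u^\bullet\in(-\sqrt2)^kB$. "Contains a circle of radius $r$" means contains a closed disk of radius $r$. *)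

theory Defs
  imports "HOL-Analysis.Analysis"
begin

definition omega :: complex where
  "omega = cis (pi / 4)"

definition zomega :: "int \<Rightarrow> int \<Rightarrow> int \<Rightarrow> int \<Rightarrow> complex" where
  "zomega a0 a1 a2 a3 = of_int a0 + of_int a1 * omega + of_int a2 * omega ^ 2 + of_int a3 * omega ^ 3"

definition ZOmega :: "complex set" where
  "ZOmega = {zomega a0 a1 a2 a3 | a0 a1 a2 a3. True}"

text \<open>The automorphism (bullet) on Z[w], defined via the (unique) integer coordinates.\<close>
definition zomega_bullet :: "complex \<Rightarrow> complex" where
  "zomega_bullet u = (THE v. \<exists>a0 a1 a2 a3. u = zomega a0 a1 a2 a3 \<and> v = zomega a0 (- a1) a2 (- a3))"

definition scale_set :: "real \<Rightarrow> complex set \<Rightarrow> complex set" where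
  "scale_set c S = (\<lambda>z. complex_of_real c * z) ` S"

definition scaled_grid_solution :: "complex set \<Rightarrow> complex set \<Rightarrow> nat \<Rightarrow> complex \<Rightarrow> bool" where
  "scaled_grid_solution A B k u \<longleftrightarrow>
     u \<in> ZOmega \<and> u \<in> scale_set (sqrt 2 ^ k) A \<and> zomega_bullet u \<in> scale_set ((- sqrt 2) ^ k) B"

end

theory Submission
  imports Defs
begin

text \<open>
  Write elements of \<open>\<int>[\<surd>2]\<close> as \<open>a + b\<surd>2\<close> with conjugate \<open>a - b\<surd>2\<close>. The one-dimensional grid
  problem asks for such an element in an interval of half-width \<open>\<delta>\<close> whose conjugate lies in an
  interval of half-width \<open>\<Delta>\<close>. If \<open>\<delta>, \<Delta> \<ge> 1\<close> and \<open>\<delta> + \<Delta> \<ge> 2 + \<surd>2\<close>, the admissible values of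
  \<open>2b\<surd>2\<close> form a window of length at least \<open>2\<surd>2\<close>, and for such \<open>b\<close> the admissible \<open>a\<close> form an interval
  of length at least 2; this gives two solutions \<open>(a, b)\<close> and \<open>(a + 1, b)\<close>. Multiplication by the unit
  \<open>\<lambda> = 1 + \<surd>2\<close>, whose conjugate is \<open>-\<lambda>\<^sup>-\<^sup>1\<close>, turns solutions for \<open>(\<delta>, \<Delta>)\<close> into solutions for
  \<open>(\<lambda>\<delta>, \<Delta>/\<lambda>)\<close>, so any pair with \<open>\<delta>\<Delta> \<ge> \<lambda>\<^sup>2/2\<close> can be rebalanced to \<open>\<lambda>\<^sup>-\<^sup>1 \<le> \<delta>/\<Delta> \<le> \<lambda>\<close>, where
  the first case applies by AM-GM.

  Since \<open>\<omega> = (1 + i)/\<surd>2\<close>, \<open>\<int>[\<omega>]\<close> contains \<open>\<int>[\<surd>2] + i\<int>[\<surd>2]\<close>, on which \<open>\<bullet>\<close> conjugates both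
  coordinates. A disk of radius \<open>\<rho>\<close> contains the square of half-side \<open>\<rho>/\<surd>2\<close>, so solving the
  one-dimensional problem for the real parts (twice) and the imaginary parts (once) with
  \<open>\<delta>\<Delta> = 2\<^sup>k rR/2 \<ge> \<lambda>\<^sup>2/2\<close> yields two distinct solutions of the scaled grid problem.
\<close>

lemma nat_square_eq_twice_square: "(m::nat)^2 = 2 * n^2 \<Longrightarrow> n = 0"
proof (induction n arbitrary: m rule: less_induct)
  case (less n)
  have "even m" using less.prems by (metis dvd_triv_left even_power)
  then obtain m' where m: "m = 2 * m'" by blast
  have "n^2 = 2 * m'^2" using less.prems m by (simp add: power2_eq_square)
  then have "even n" by (metis dvd_triv_left even_power)
  then obtain n' where n: "n = 2 * n'" by blast
  have "m'^2 = 2 * n'^2" using \<open>n^2 = 2 * m'^2\<close> n by (simp add: power2_eq_square)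
  then show ?case using less.IH[of n'] n by (cases "n' = 0") auto
qed

lemma of_int_eq_mult_sqrt2_imp_zero:
  assumes "real_of_int m = real_of_int n * sqrt 2" shows "n = 0"
proof -
  have "real_of_int (m^2) = real_of_int (2 * n^2)"
    using arg_cong[OF assms, of "\<lambda>x. x^2"] by (simp add: power_mult_distrib)
  then have "(nat \<bar>m\<bar>)^2 = 2 * (nat \<bar>n\<bar>)^2"
    by (metis of_int_eq_iff abs_ge_zero nat_mult_distrib nat_numeral nat_power_eq power2_abs
        zero_le_numeral)
  then show ?thesis using nat_square_eq_twice_square by fastforce
qed

definition zsqrt2 :: "int \<Rightarrow> int \<Rightarrow> real" where
  "zsqrt2 a b = of_int a + of_int b * sqrt 2"

lemma zsqrt2_eq_iff: "zsqrt2 a b = zsqrt2 c d \<longleftrightarrow> a = c \<and> b = d"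
proof
  assume "zsqrt2 a b = zsqrt2 c d"
  then have "real_of_int (a - c) = real_of_int (d - b) * sqrt 2"
    unfolding zsqrt2_def by (simp add: algebra_simps)
  then have "d - b = 0" by (rule of_int_eq_mult_sqrt2_imp_zero)
  then show "a = c \<and> b = d" using \<open>zsqrt2 a b = zsqrt2 c d\<close> by (simp add: zsqrt2_def)
qed simp

definition grid_solutions :: "real set \<Rightarrow> real set \<Rightarrow> (int \<times> int) set" where
  "grid_solutions I J = {(a, b). zsqrt2 a b \<in> I \<and> zsqrt2 a (- b) \<in> J}"

definition has_two_grid_solutions :: "real \<Rightarrow> real \<Rightarrow> bool" where
  "has_two_grid_solutions \<delta> \<Delta> \<longleftrightarrow>
     (\<forall>x y. \<exists>p \<in> grid_solutions (cball x \<delta>) (cball y \<Delta>).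
              \<exists>q \<in> grid_solutions (cball x \<delta>) (cball y \<Delta>). p \<noteq> q)"

lemma has_two_grid_solutions_if_wide:
  assumes "1 \<le> \<delta>" "1 \<le> \<Delta>" "2 + sqrt 2 \<le> \<delta> + \<Delta>"
  shows "has_two_grid_solutions \<delta> \<Delta>"
  unfolding has_two_grid_solutions_def
proof (intro allI)
  fix x y :: real
  define b where "b = \<lceil>(x - y - \<delta> - \<Delta> + 2) / (2 * sqrt 2)\<rceil>"
  define \<beta> where "\<beta> = of_int b * sqrt 2"
  define lo where "lo = max (x - \<delta> - \<beta>) (y - \<Delta> + \<beta>)"
  define hi where "hi = min (x + \<delta> - \<beta>) (y + \<Delta> + \<beta>)"
  have "(x - y - \<delta> - \<Delta> + 2) / (2 * sqrt 2) \<le> b"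
    "b < (x - y - \<delta> - \<Delta> + 2) / (2 * sqrt 2) + 1"
    unfolding b_def by linarith+
  then have "x - y - \<delta> - \<Delta> + 2 \<le> 2 * \<beta>" "2 * \<beta> < x - y - \<delta> - \<Delta> + 2 + 2 * sqrt 2"
    by (simp_all add: \<beta>_def field_simps)
  then have "lo + 2 \<le> hi"
    using assms unfolding lo_def hi_def max_def min_def by auto
  moreover have sol: "(a, b) \<in> grid_solutions (cball x \<delta>) (cball y \<Delta>)" if "lo \<le> a" "a \<le> hi" for a
    using that by (auto simp: grid_solutions_def zsqrt2_def dist_real_def abs_le_iff lo_def hi_def \<beta>_def)
  moreover have "lo \<le> \<lceil>lo\<rceil>" "\<lceil>lo\<rceil> < lo + 1"
    by linarith+
  ultimately have "(\<lceil>lo\<rceil>, b) \<in> grid_solutions (cball x \<delta>) (cball y \<Delta>)"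
    "(\<lceil>lo\<rceil> + 1, b) \<in> grid_solutions (cball x \<delta>) (cball y \<Delta>)"
    by (intro sol; simp; linarith)+
  moreover have "(\<lceil>lo\<rceil>, b) \<noteq> (\<lceil>lo\<rceil> + 1, b)"
    by simp
  ultimately show "\<exists>p \<in> grid_solutions (cball x \<delta>) (cball y \<Delta>).
              \<exists>q \<in> grid_solutions (cball x \<delta>) (cball y \<Delta>). p \<noteq> q"
    by (intro bexI)
qed

lemma one_le_if_balanced:
  assumes "0 < \<delta>" "(1 + sqrt 2)^2 / 2 \<le> \<delta> * \<Delta>" "\<Delta> \<le> (1 + sqrt 2) * \<delta>"
  shows "1 \<le> \<delta>"
proof -
  have "(1 + sqrt 2) * ((1 + sqrt 2) / 2) \<le> (1 + sqrt 2) * \<delta>^2"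
    using assms(2) mult_left_mono[OF assms(3), of \<delta>] assms(1)
    by (simp add: power2_eq_square algebra_simps)
  then have "(1 + sqrt 2) / 2 \<le> \<delta>^2"
    by (rule mult_left_le_imp_le) (simp add: add_pos_nonneg)
  moreover have "1 \<le> (1 + sqrt 2) / 2"
    by simp
  ultimately have "1 \<le> \<delta>^2"
    by (rule order_trans[rotated])
  then show ?thesis
    using assms(1) abs_le_square_iff[of 1 \<delta>] by simp
qed

lemma has_two_grid_solutions_if_balanced:
  assumes "0 < \<delta>" "0 < \<Delta>" "(1 + sqrt 2)^2 / 2 \<le> \<delta> * \<Delta>"
    and "\<delta> \<le> (1 + sqrt 2) * \<Delta>" "\<Delta> \<le> (1 + sqrt 2) * \<delta>"
  shows "has_two_grid_solutions \<delta> \<Delta>"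
proof (rule has_two_grid_solutions_if_wide)
  show "1 \<le> \<delta>" "1 \<le> \<Delta>"
    using one_le_if_balanced[of \<delta> \<Delta>] one_le_if_balanced[of \<Delta> \<delta>] assms
    by (simp_all add: mult.commute)
  have "(2 + sqrt 2)^2 = 2 * (1 + sqrt 2)^2"
    by (simp add: power2_eq_square algebra_simps)
  also have "\<dots> \<le> 4 * (\<delta> * \<Delta>)"
    using assms(3) by (simp add: ac_simps)
  also have "\<dots> \<le> (\<delta> + \<Delta>)^2"
    using zero_le_power2[of "\<delta> - \<Delta>"] by (simp add: power2_eq_square algebra_simps)
  finally show "2 + sqrt 2 \<le> \<delta> + \<Delta>"
    by (rule power2_le_imp_le) (use assms(1,2) in simp)
qed

lemma zsqrt2_mult_unit:
  "zsqrt2 (a + 2 * b) (a + b) = (1 + sqrt 2) * zsqrt2 a b"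
  "zsqrt2 (a + 2 * b) (- a - b) = (1 - sqrt 2) * zsqrt2 a (- b)"
  "zsqrt2 (2 * b - a) (a - b) = (sqrt 2 - 1) * zsqrt2 a b"
  "zsqrt2 (2 * b - a) (b - a) = (- 1 - sqrt 2) * zsqrt2 a (- b)"
  by (simp_all add: zsqrt2_def algebra_simps)

lemma grid_solutions_mult_unit:
  "(\<lambda>(a, b). (a + 2 * b, a + b)) ` grid_solutions I J =
     grid_solutions ((*) (1 + sqrt 2) ` I) ((*) (1 - sqrt 2) ` J)"
proof (intro equalityI subsetI)
  fix p assume "p \<in> (\<lambda>(a, b). (a + 2 * b, a + b)) ` grid_solutions I J"
  then obtain a b where "p = (a + 2 * b, a + b)" "zsqrt2 a b \<in> I" "zsqrt2 a (- b) \<in> J"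
    by (auto simp: grid_solutions_def)
  then show "p \<in> grid_solutions ((*) (1 + sqrt 2) ` I) ((*) (1 - sqrt 2) ` J)"
    by (simp add: grid_solutions_def zsqrt2_mult_unit rev_image_eqI)
next
  fix p assume "p \<in> grid_solutions ((*) (1 + sqrt 2) ` I) ((*) (1 - sqrt 2) ` J)"
  then obtain a b u v where p: "p = (a, b)" "u \<in> I" "v \<in> J"
    "zsqrt2 a b = (1 + sqrt 2) * u" "zsqrt2 a (- b) = (1 - sqrt 2) * v"
    by (auto simp: grid_solutions_def)
  have "(sqrt 2 - 1) * (1 + sqrt 2) = 1" "(- 1 - sqrt 2) * (1 - sqrt 2) = 1"
    by (simp_all add: algebra_simps)
  then have "zsqrt2 (2 * b - a) (a - b) = u" "zsqrt2 (2 * b - a) (b - a) = v"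
    using p(4,5) by (simp_all add: zsqrt2_mult_unit mult.assoc[symmetric])
  then have "(2 * b - a, a - b) \<in> grid_solutions I J"
    using p(2,3) by (simp add: grid_solutions_def)
  then show "p \<in> (\<lambda>(a, b). (a + 2 * b, a + b)) ` grid_solutions I J"
    unfolding p(1) by (rule rev_image_eqI) simp
qed

lemma image_mult_cball: "(c::real) \<noteq> 0 \<Longrightarrow> (*) c ` cball x r = cball (c * x) (\<bar>c\<bar> * r)"
  using cball_scale[of c x r] by simp

lemma all_mult_iff:
  fixes a b :: "'a :: field"
  assumes "a \<noteq> 0" "b \<noteq> 0"
  shows "(\<forall>x y. P (a * x) (b * y)) \<longleftrightarrow> (\<forall>x y. P x y)"
proof
  assume "\<forall>x y. P (a * x) (b * y)"
  then have "P (a * (x / a)) (b * (y / b))" for x y by blast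
  then show "\<forall>x y. P x y" using assms by simp
qed simp

lemma has_two_grid_solutions_scale_unit:
  "has_two_grid_solutions ((1 + sqrt 2) * \<delta>) (\<Delta> / (1 + sqrt 2)) \<longleftrightarrow>
     has_two_grid_solutions \<delta> \<Delta>"
proof -
  define T where "T = (\<lambda>(a::int, b::int). (a + 2 * b, a + b))"
  have "inj T"
    unfolding T_def inj_def by auto
  have pos: "0 < 1 + sqrt 2"
    by (simp add: add_pos_nonneg)
  moreover have "\<bar>1 - sqrt 2\<bar> * (1 + sqrt 2) = 1"
    by (simp add: abs_if algebra_simps)
  ultimately have "\<bar>1 - sqrt 2\<bar> = 1 / (1 + sqrt 2)"
    by (simp add: eq_divide_eq)
  then have "\<bar>1 - sqrt 2\<bar> * \<Delta> = \<Delta> / (1 + sqrt 2)"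
    by simp
  then have image: "grid_solutions (cball ((1 + sqrt 2) * x) ((1 + sqrt 2) * \<delta>))
      (cball ((1 - sqrt 2) * y) (\<Delta> / (1 + sqrt 2))) =
    T ` grid_solutions (cball x \<delta>) (cball y \<Delta>)" for x y
    unfolding T_def grid_solutions_mult_unit using pos by (simp add: image_mult_cball)
  show ?thesis
    unfolding has_two_grid_solutions_def
    by (subst all_mult_iff[of "1 + sqrt 2" "1 - sqrt 2", symmetric])
      (use pos in \<open>simp_all add: image inj_eq[OF \<open>inj T\<close>]\<close>)
qed

lemma power_int_scaling_invariant:
  fixes P :: "'a :: field \<Rightarrow> 'a \<Rightarrow> bool"
  assumes "c \<noteq> 0" and invariant: "\<And>\<delta> \<Delta>. P (c * \<delta>) (\<Delta> / c) \<longleftrightarrow> P \<delta> \<Delta>"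
  shows "P (c powi n * \<delta>) (\<Delta> / c powi n) \<longleftrightarrow> P \<delta> \<Delta>"
proof (induction n arbitrary: \<delta> \<Delta> rule: int_induct[where k = 0])
  case base
  then show ?case by simp
next
  case (step1 i)
  have "c powi (i + 1) = c powi i * c"
    using assms(1) by (rule power_int_add_1[OF disjI1])
  then have "c powi (i + 1) * \<delta> = c powi i * (c * \<delta>)"
    "\<Delta> / c powi (i + 1) = (\<Delta> / c) / c powi i"
    by (simp_all add: mult_ac)
  then show ?case
    by (simp only: step1.IH invariant)
next
  case (step2 i)
  have "c powi (i - 1) = c powi i / c"
    using power_int_diff[of c i 1] assms(1) by simp
  then have "c powi (i - 1) * \<delta> = c powi i * (\<delta> / c)"
    "\<Delta> / c powi (i - 1) = (c * \<Delta>) / c powi i"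
    using assms(1) by (simp_all add: field_simps)
  moreover have "P (\<delta> / c) (c * \<Delta>) \<longleftrightarrow> P \<delta> \<Delta>"
    using invariant[of "\<delta> / c" "c * \<Delta>"] assms(1) by simp
  ultimately show ?case
    by (simp only: step2.IH)
qed

lemma exists_power_int_balancing:
  fixes c \<delta> \<Delta> :: real
  assumes "1 < c" "0 < \<delta>" "0 < \<Delta>"
  shows "\<exists>n. c powi n * \<delta> \<le> c * (\<Delta> / c powi n) \<and>
             \<Delta> / c powi n \<le> c * (c powi n * \<delta>)"
proof -
  define n where "n = \<lfloor>log (c^2) (c * \<Delta> / \<delta>)\<rfloor>"
  define u where "u = c powi n"
  have "0 < u"
    using assms(1) by (simp add: u_def)
  have "1 < c^2"
    using assms(1) by (simp add: one_less_power)
  then have "(c^2) powr n \<le> c * \<Delta> / \<delta>" "c * \<Delta> / \<delta> < (c^2) powr (n + 1)"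
    using floor_log_eq_powr_iff[of "c * \<Delta> / \<delta>" "c^2" n] assms by (simp_all add: n_def)
  moreover have sq: "(c^2) powr n = u * u"
    using assms(1) by (simp add: u_def powr_real_of_int' power2_eq_square power_int_mult_distrib)
  moreover have "(c^2) powr (n + 1) = c * (c * (u * u))"
    using sq assms(1) by (simp add: powr_add power2_eq_square)
  ultimately have "u * u * \<delta> \<le> c * \<Delta>" "\<Delta> < c * (u * u * \<delta>)"
    using assms by (simp_all add: pos_le_divide_eq pos_divide_less_eq mult_ac)
  with \<open>0 < u\<close> have "u * \<delta> \<le> c * (\<Delta> / u)" "\<Delta> / u \<le> c * (u * \<delta>)"
    by (simp_all add: field_simps)
  then show ?thesis
    unfolding u_def by blast
qed

theorem has_two_grid_solutions_if_product_ge: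
  assumes "0 < \<delta>" "0 < \<Delta>" "(1 + sqrt 2)^2 / 2 \<le> \<delta> * \<Delta>"
  shows "has_two_grid_solutions \<delta> \<Delta>"
proof -
  have gt1: "1 < 1 + sqrt 2"
    by simp
  then obtain n where n: "(1 + sqrt 2) powi n * \<delta> \<le> (1 + sqrt 2) * (\<Delta> / (1 + sqrt 2) powi n)"
    "\<Delta> / (1 + sqrt 2) powi n \<le> (1 + sqrt 2) * ((1 + sqrt 2) powi n * \<delta>)"
    using exists_power_int_balancing assms(1,2) by blast
  have "has_two_grid_solutions ((1 + sqrt 2) powi n * \<delta>) (\<Delta> / (1 + sqrt 2) powi n)"
    by (rule has_two_grid_solutions_if_balanced) (use assms n in \<open>simp_all add: add_pos_nonneg\<close>)
  moreover have "1 + sqrt 2 \<noteq> 0"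
    using gt1 by linarith
  ultimately show ?thesis
    using power_int_scaling_invariant[of "1 + sqrt 2" has_two_grid_solutions,
        OF _ has_two_grid_solutions_scale_unit]
    by blast
qed

lemma omega_eq: "omega = Complex (sqrt 2 / 2) (sqrt 2 / 2)"
  unfolding omega_def by (simp add: complex_eq_iff cos_45 sin_45)

lemma zomega_eq_Complex:
  "zomega a0 a1 a2 a3 = Complex (zsqrt2 (2 * a0) (a1 - a3) / 2) (zsqrt2 (2 * a2) (a1 + a3) / 2)"
proof -
  have "omega ^ 2 = \<i>"
    by (simp add: omega_eq power2_eq_square complex_eq_iff)
  then have "omega ^ 3 = \<i> * omega"
    by (simp add: power_Suc numeral_3_eq_3 power2_eq_square mult_ac)
  with \<open>omega ^ 2 = \<i>\<close> show ?thesis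
    unfolding zomega_def zsqrt2_def by (simp add: omega_eq complex_eq_iff field_simps)
qed

lemma zomega_eq_iff:
  "zomega a0 a1 a2 a3 = zomega b0 b1 b2 b3 \<longleftrightarrow> a0 = b0 \<and> a1 = b1 \<and> a2 = b2 \<and> a3 = b3"
  by (auto simp: zomega_eq_Complex zsqrt2_eq_iff)

lemma zomega_bullet_zomega: "zomega_bullet (zomega a0 a1 a2 a3) = zomega a0 (- a1) a2 (- a3)"
  unfolding zomega_bullet_def by (rule the_equality) (auto simp: zomega_eq_iff)

lemma Complex_zsqrt2_eq_zomega: "Complex (zsqrt2 a b) (zsqrt2 c d) = zomega a (b + d) c (d - b)"
  by (simp add: zomega_eq_Complex zsqrt2_def)

lemma zomega_bullet_Complex_zsqrt2:
  "zomega_bullet (Complex (zsqrt2 a b) (zsqrt2 c d)) = Complex (zsqrt2 a (- b)) (zsqrt2 c (- d))"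
  by (simp add: Complex_zsqrt2_eq_zomega zomega_bullet_zomega)

lemma scale_set_cball: "c \<noteq> 0 \<Longrightarrow> scale_set c (cball p r) = cball (of_real c * p) (\<bar>c\<bar> * r)"
  using cball_scale[of c p r] by (simp add: scale_set_def scaleR_conv_of_real)

lemma mem_cball_if_Re_Im:
  assumes "Re z \<in> cball (Re p) (r / sqrt 2)" "Im z \<in> cball (Im p) (r / sqrt 2)"
  shows "z \<in> cball p r"
proof -
  have "0 \<le> r / sqrt 2"
    using assms(1) by (simp add: dist_real_def)
  then have "0 \<le> r"
    by (simp add: zero_le_divide_iff)
  then have "(Re p - Re z)^2 \<le> (r / sqrt 2)^2" "(Im p - Im z)^2 \<le> (r / sqrt 2)^2"
    using assms by (simp_all add: dist_real_def abs_le_square_iff[symmetric])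
  then have "(dist p z)^2 \<le> r^2"
    by (simp add: dist_norm cmod_def power_divide)
  then show ?thesis
    unfolding mem_cball using \<open>0 \<le> r\<close> by (rule power2_le_imp_le)
qed

lemma scaled_grid_solution_ComplexI:
  assumes "cball p r \<subseteq> A" "cball q R \<subseteq> B"
    and "(a, b) \<in> grid_solutions (cball (sqrt 2 ^ k * Re p) (sqrt 2 ^ k * r / sqrt 2))
                                 (cball ((- sqrt 2) ^ k * Re q) (sqrt 2 ^ k * R / sqrt 2))"
    and "(c, d) \<in> grid_solutions (cball (sqrt 2 ^ k * Im p) (sqrt 2 ^ k * r / sqrt 2))
                                 (cball ((- sqrt 2) ^ k * Im q) (sqrt 2 ^ k * R / sqrt 2))"
  shows "scaled_grid_solution A B k (Complex (zsqrt2 a b) (zsqrt2 c d))"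
proof -
  have scale_nonzero: "sqrt 2 ^ k \<noteq> 0" "(- sqrt 2) ^ k \<noteq> 0"
    by simp_all
  have "Complex (zsqrt2 a b) (zsqrt2 c d) \<in> scale_set (sqrt 2 ^ k) (cball p r)"
    unfolding scale_set_cball[OF scale_nonzero(1)]
    by (rule mem_cball_if_Re_Im) (use assms(3,4) in \<open>simp_all add: grid_solutions_def\<close>)
  with assms(1) have "Complex (zsqrt2 a b) (zsqrt2 c d) \<in> scale_set (sqrt 2 ^ k) A"
    unfolding scale_set_def by blast
  moreover have "Complex (zsqrt2 a (- b)) (zsqrt2 c (- d)) \<in> scale_set ((- sqrt 2) ^ k) (cball q R)"
    unfolding scale_set_cball[OF scale_nonzero(2)]
    by (rule mem_cball_if_Re_Im) (use assms(3,4) in \<open>simp_all add: grid_solutions_def power_abs\<close>)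
  with assms(2) have "Complex (zsqrt2 a (- b)) (zsqrt2 c (- d)) \<in> scale_set ((- sqrt 2) ^ k) B"
    unfolding scale_set_def by blast
  moreover have "Complex (zsqrt2 a b) (zsqrt2 c d) \<in> ZOmega"
    unfolding Complex_zsqrt2_eq_zomega ZOmega_def by blast
  ultimately show ?thesis
    unfolding scaled_grid_solution_def zomega_bullet_Complex_zsqrt2 by blast
qed

lemma two_scaled_grid_solutions:
  assumes "cball p r \<subseteq> A" "cball q R \<subseteq> B"
    and "has_two_grid_solutions (sqrt 2 ^ k * r / sqrt 2) (sqrt 2 ^ k * R / sqrt 2)"
  shows "\<exists>u v. u \<noteq> v \<and> scaled_grid_solution A B k u \<and> scaled_grid_solution A B k v"
proof -
  let ?\<delta> = "sqrt 2 ^ k * r / sqrt 2" and ?\<Delta> = "sqrt 2 ^ k * R / sqrt 2"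
  obtain s s' w where sol: "s \<noteq> s'"
    "s \<in> grid_solutions (cball (sqrt 2 ^ k * Re p) ?\<delta>) (cball ((- sqrt 2) ^ k * Re q) ?\<Delta>)"
    "s' \<in> grid_solutions (cball (sqrt 2 ^ k * Re p) ?\<delta>) (cball ((- sqrt 2) ^ k * Re q) ?\<Delta>)"
    "w \<in> grid_solutions (cball (sqrt 2 ^ k * Im p) ?\<delta>) (cball ((- sqrt 2) ^ k * Im q) ?\<Delta>)"
    using assms(3) unfolding has_two_grid_solutions_def by blast
  obtain a b a' b' c d where "s = (a, b)" "s' = (a', b')" "w = (c, d)"
    by (cases s; cases s'; cases w) blast
  with sol have "scaled_grid_solution A B k (Complex (zsqrt2 a b) (zsqrt2 c d))"
    "scaled_grid_solution A B k (Complex (zsqrt2 a' b') (zsqrt2 c d))"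
    "Complex (zsqrt2 a b) (zsqrt2 c d) \<noteq> Complex (zsqrt2 a' b') (zsqrt2 c d)"
    using scaled_grid_solution_ComplexI[OF assms(1,2)] by (simp_all add: zsqrt2_eq_iff)
  then show ?thesis
    by blast
qed

theorem lemma5p57:
  fixes A B :: "complex set" and k :: nat and r R :: real
  assumes "convex A" and "convex B"
    and "r \<ge> 0" and "R \<ge> 0"
    and "\<exists>c. cball c r \<subseteq> A" and "\<exists>c. cball c R \<subseteq> B"
    and "r * R \<ge> (1 + sqrt 2) ^ 2 / 2 ^ k"
  shows "\<exists>u v. u \<noteq> v \<and> scaled_grid_solution A B k u \<and> scaled_grid_solution A B k v"
proof -
  obtain p q where disks: "cball p r \<subseteq> A" "cball q R \<subseteq> B"
    using assms(5,6) by blast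
  have "0 < (1 + sqrt 2) ^ 2 / 2 ^ k"
    using add_pos_nonneg[of 1 "sqrt 2"] by simp
  then have "0 < r * R"
    using assms(7) by linarith
  then have "0 < r" "0 < R"
    using assms(3,4) by (auto simp: zero_less_mult_iff)
  moreover have "(1 + sqrt 2) ^ 2 \<le> 2 ^ k * (r * R)"
    using assms(7) by (simp add: divide_le_eq mult.commute)
  ultimately have "has_two_grid_solutions (sqrt 2 ^ k * r / sqrt 2) (sqrt 2 ^ k * R / sqrt 2)"
    by (intro has_two_grid_solutions_if_product_ge) (simp_all add: power_mult_distrib[symmetric] mult_ac)
  then show ?thesis
    using two_scaled_grid_solutions[OF disks] by blast
qed

end
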